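(* Under the standing assumptions below, the family $\mathcal U=\{I(\mathcal P):\mathcal P \text{ a finite partition of } \lambda\}$ is an ultrafilter on $\lambda$.
   Context: Standing assumptions: $G$ is a finite graph with at least one edge which is trivially power-colorable (for every positive integer $n$, every $\chi(G)$-coloring of $G^n$ is of the form $v\mapsto\phi(v_i)$ for some coordinate $i$ and proper coloring $\phi$ of $G$), $k=\chi(G)$, $\lambda$ is an infinite cardinal, and $\Phi$ is a fixed proper $k$-coloring of $G^\lambda$ (vertex set $V(G)^\lambda$, $(v_\xi)$ adjacent to $(w_\xi)$ iff $v_\xi w_\xi\in E(G)$ for all $\xi<\lambda$). A finite partition of $\lambda$ is a partition of $\lambda$ into finitely many nonempty pieces. For a finite partition $\mathcal P$, $V_{\mathcal P}=\{\mathbf v\in V(G^\lambda): \mathbf v\restriction A \text{ is constant for each } A\in\mathcal P\}$, and for $\mathbf v\in V_{\mathcal P}$, $A\in\mathcal P$, $\mathbf v_A$ is the constant value of $\mathbf v$ on $A$. If $\mathcal P=\{A_1,\dots,A_n\}$, the induced subgraph on $V_{\mathcal P}$ is isomorphic to $G^n$ via $\mathbf v\mapsto(\mathbf v_{A_1},\dots,\mathbf v_{A_n})$, so there are $i$ and a proper coloring $\phi$ of $G$ with $\Phi(\mathbf v)=\phi(\mathbf v_{A_i})$ for all $\mathbf v\in V_{\mathcal P}$; since $G$ has an edge, $A_i$ is uniquely determined and is denoted $I(\mathcal P)$. *)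

theory Defs
  imports Main "HOL-Library.Disjoint_Sets"
begin

definition simple_graph :: "('v \<Rightarrow> 'v \<Rightarrow> bool) \<Rightarrow> bool" where
  "simple_graph E \<longleftrightarrow> (\<forall>a b. E a b \<longrightarrow> E b a) \<and> (\<forall>a. \<not> E a a)"

definition proper_coloring :: "('v \<Rightarrow> 'v \<Rightarrow> bool) \<Rightarrow> nat \<Rightarrow> ('v \<Rightarrow> nat) \<Rightarrow> bool" where
  "proper_coloring E k c \<longleftrightarrow> (\<forall>a. c a < k) \<and> (\<forall>a b. E a b \<longrightarrow> c a \<noteq> c b)"

definition chromatic_number :: "('v \<Rightarrow> 'v \<Rightarrow> bool) \<Rightarrow> nat" where
  "chromatic_number E = (LEAST k. \<exists>c. proper_coloring E k c)"

text \<open>The n-th power G^n: vertices are lists of length n, adjacency coordinatewise.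
  A proper k-colouring of G^n.\<close>
definition power_coloring :: "('v \<Rightarrow> 'v \<Rightarrow> bool) \<Rightarrow> nat \<Rightarrow> nat \<Rightarrow> ('v list \<Rightarrow> nat) \<Rightarrow> bool" where
  "power_coloring E n k c \<longleftrightarrow>
     (\<forall>v. length v = n \<longrightarrow> c v < k) \<and>
     (\<forall>v w. length v = n \<longrightarrow> length w = n \<longrightarrow> list_all2 E v w \<longrightarrow> c v \<noteq> c w)"

definition trivially_power_colorable :: "('v \<Rightarrow> 'v \<Rightarrow> bool) \<Rightarrow> bool" where
  "trivially_power_colorable E \<longleftrightarrow>
     (\<forall>n>0. \<forall>c. power_coloring E n (chromatic_number E) c \<longrightarrow>
        (\<exists>i<n. \<exists>\<phi>. proper_coloring E (chromatic_number E) \<phi> \<and>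
            (\<forall>v. length v = n \<longrightarrow> c v = \<phi> (v ! i))))"

text \<open>Proper k-colouring of G^lambda, lambda being the (infinite) index type 'l.\<close>
definition big_power_coloring :: "('v \<Rightarrow> 'v \<Rightarrow> bool) \<Rightarrow> nat \<Rightarrow> (('l \<Rightarrow> 'v) \<Rightarrow> nat) \<Rightarrow> bool" where
  "big_power_coloring E k \<Phi> \<longleftrightarrow>
     (\<forall>v. \<Phi> v < k) \<and> (\<forall>v w. (\<forall>x. E (v x) (w x)) \<longrightarrow> \<Phi> v \<noteq> \<Phi> w)"

definition finite_partition :: "'l set set \<Rightarrow> bool" where
  "finite_partition P \<longleftrightarrow> finite P \<and> partition_on UNIV P"

definition V_part :: "'l set set \<Rightarrow> ('l \<Rightarrow> 'v) set" where
  "V_part P = {v. \<forall>A\<in>P. \<exists>c. \<forall>x\<in>A. v x = c}"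

text \<open>The constant value v_A of v on a nonempty piece A.\<close>
definition val_on :: "('l \<Rightarrow> 'v) \<Rightarrow> 'l set \<Rightarrow> 'v" where
  "val_on v A = v (SOME x. x \<in> A)"

definition I_part :: "('v \<Rightarrow> 'v \<Rightarrow> bool) \<Rightarrow> (('l \<Rightarrow> 'v) \<Rightarrow> nat) \<Rightarrow> 'l set set \<Rightarrow> 'l set" where
  "I_part E \<Phi> P = (THE A. A \<in> P \<and> (\<exists>\<phi>. proper_coloring E (chromatic_number E) \<phi> \<and>
                         (\<forall>v\<in>V_part P. \<Phi> v = \<phi> (val_on v A))))"

definition ultrafilter_on :: "'l set \<Rightarrow> 'l set set \<Rightarrow> bool" where
  "ultrafilter_on L U \<longleftrightarrow>
     U \<subseteq> Pow L \<and> L \<in> U \<and> {} \<notin> U \<and>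
     (\<forall>A B. A \<in> U \<longrightarrow> A \<subseteq> B \<longrightarrow> B \<subseteq> L \<longrightarrow> B \<in> U) \<and>
     (\<forall>A B. A \<in> U \<longrightarrow> B \<in> U \<longrightarrow> A \<inter> B \<in> U) \<and>
     (\<forall>A. A \<subseteq> L \<longrightarrow> A \<in> U \<or> L - A \<in> U)"

end

theory Submission
  imports Defs
begin

text \<open>
  For a finite partition \<open>P = {A\<^sub>1, \<dots>, A\<^sub>n}\<close>, the vertices of \<open>G\<^sup>\<lambda>\<close> constant on each piece form
  a copy of \<open>G\<^sup>n\<close>, so as \<open>G\<close> is trivially power-colorable, \<open>\<Phi>\<close> restricted to \<open>V\<^sub>P\<close> is a proper
  coloring of one coordinate \<open>I(P)\<close>. Evaluating at a constant vertex and at a vertex that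
  differs from it only on one piece shows that two factorizations of \<open>\<Phi>\<close> on \<open>V\<^sub>P\<close>, through the
  value on a nonempty \<open>A \<subseteq> B \<in> P\<close> and through the value on \<open>C \<in> P\<close>, force \<open>B = C\<close>. As
  \<open>V\<^sub>P \<subseteq> V\<^sub>R\<close> for every refinement \<open>R\<close> of \<open>P\<close>, this gives \<open>I(R) \<subseteq> I(P)\<close>; so any two sets
  \<open>I(P)\<close>, \<open>I(Q)\<close> contain a common nonempty \<open>I(R)\<close>. Upward closure follows by
  comparison with the two-piece partition \<open>{B, -B}\<close>, and ultrafilterness from
  \<open>I({A, -A}) \<in> {A, -A}\<close>.
\<close>

lemma finite_partition_UNIV: "finite_partition {UNIV}"
  by (simp add: finite_partition_def partition_on_space)

lemma finite_partition_Compl: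
  assumes "B \<noteq> {}" "B \<noteq> UNIV"
  shows "finite_partition {B, - B}"
  using assms unfolding finite_partition_def
  by (intro conjI partition_onI) (auto simp: disjnt_def)

lemma finite_partition_common_refinement:
  assumes "finite_partition P" "finite_partition Q"
  obtains R where "finite_partition R" "refines UNIV R P" "refines UNIV R Q"
proof
  let ?R = "common_refinement {P, Q}"
  have parts: "\<And>S. S \<in> {P, Q} \<Longrightarrow> partition_on UNIV S"
    using assms by (auto simp: finite_partition_def)
  have "finite (\<Pi>\<^sub>E S\<in>{P, Q}. S)"
    using assms by (intro finite_PiE) (auto simp: finite_partition_def)
  then have "finite ?R"
    by (simp add: common_refinement_def)
  then show "finite_partition ?R"
    using partition_on_common_refinement[where \<P> = "{P, Q}", OF parts] by (simp add: finite_partition_def)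
  show "refines UNIV ?R P" "refines UNIV ?R Q"
    using refines_common_refinement[where \<P> = "{P, Q}", OF parts] by simp_all
qed

lemma const_in_V_part: "(\<lambda>_. a) \<in> V_part P"
  by (auto simp: V_part_def)

lemma val_on_const: "val_on (\<lambda>_. a) A = a"
  by (simp add: val_on_def)

lemma val_on_eq:
  assumes "v \<in> V_part P" "B \<in> P" "A \<subseteq> B" "x \<in> A"
  shows "val_on v A = v x"
proof -
  obtain c where c: "\<forall>y\<in>B. v y = c"
    using assms(1,2) by (auto simp: V_part_def)
  have "(SOME y. y \<in> A) \<in> B"
    using someI[of "\<lambda>y. y \<in> A", OF assms(4)] assms(3) by blast
  with c assms(3,4) show ?thesis
    unfolding val_on_def by (metis subsetD)
qed

lemma V_part_antimono:
  assumes "refines UNIV R P"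
  shows "V_part P \<subseteq> V_part R"
proof
  fix v assume v: "v \<in> V_part P"
  show "v \<in> V_part R" unfolding V_part_def mem_Collect_eq
  proof
    fix X assume "X \<in> R"
    then obtain Y where "Y \<in> P" "X \<subseteq> Y"
      using assms by (auto simp: refines_def)
    moreover obtain c where "\<forall>x\<in>Y. v x = c"
      using v \<open>Y \<in> P\<close> by (auto simp: V_part_def)
    ultimately show "\<exists>c. \<forall>x\<in>X. v x = c"
      by blast
  qed
qed

lemma indicator_in_V_part:
  assumes "partition_on UNIV P" "C \<in> P"
  shows "(\<lambda>x. if x \<in> C then b else a) \<in> V_part P"
  unfolding V_part_def mem_Collect_eq
proof
  fix D assume "D \<in> P"
  then consider "D = C" | "D \<inter> C = {}"
    using disjointD[OF partition_onD2[OF assms(1)] _ assms(2)] by blast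
  then show "\<exists>c. \<forall>x\<in>D. (if x \<in> C then b else a) = c"
    by cases auto
qed

subsection \<open>The piece through which a coloring factors\<close>

definition determining_piece ::
    "('v \<Rightarrow> 'v \<Rightarrow> bool) \<Rightarrow> (('l \<Rightarrow> 'v) \<Rightarrow> nat) \<Rightarrow> 'l set set \<Rightarrow> 'l set \<Rightarrow> bool" where
  "determining_piece E \<Phi> P A \<longleftrightarrow> A \<in> P \<and>
     (\<exists>\<phi>. proper_coloring E (chromatic_number E) \<phi> \<and> (\<forall>v\<in>V_part P. \<Phi> v = \<phi> (val_on v A)))"

text \<open>
  Test first on constant vertices, giving \<open>\<phi> a = \<psi> a\<close>, then on the vertex equal to \<open>b\<close> on \<open>C\<close>
  and to \<open>a\<close> elsewhere: if \<open>B \<noteq> C\<close>, it reads \<open>a\<close> on \<open>A\<close>, so \<open>\<psi> a = \<phi> a = \<psi> b\<close> for the edge \<open>ab\<close>.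
\<close>
lemma piece_eq_if_colorings_agree:
  assumes part: "partition_on UNIV Q" and edge: "E a b"
    and proper: "proper_coloring E k \<psi>"
    and A: "x \<in> A" "A \<subseteq> B" "B \<in> Q" and C: "C \<in> Q"
    and agree: "\<forall>v\<in>V_part Q. \<phi> (val_on v A) = \<psi> (val_on v C)"
  shows "B = C"
proof (rule ccontr)
  assume "B \<noteq> C"
  then have disj: "B \<inter> C = {}"
    using disjointD[OF partition_onD2[OF part] A(3) C] by blast
  obtain y where y: "y \<in> C"
    using partition_onD3[OF part] C by fastforce
  define v where "v = (\<lambda>z. if z \<in> C then b else a)"
  have v: "v \<in> V_part Q"
    unfolding v_def using indicator_in_V_part[OF part C] .
  have "\<phi> a = \<psi> a"
    using agree const_in_V_part[of a Q] by (auto simp: val_on_const)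
  also have "\<phi> a = \<phi> (val_on v A)"
    using val_on_eq[OF v A(3,2,1)] A disj by (auto simp: v_def)
  also have "\<dots> = \<psi> b"
    using agree v val_on_eq[OF v C subset_refl y] y by (simp add: v_def)
  finally show False
    using proper edge unfolding proper_coloring_def by metis
qed

text \<open>
  \<open>spread ps w\<close> is the vertex of \<open>G\<^sup>\<lambda>\<close> taking the value \<open>w ! j\<close> on the piece \<open>ps ! j\<close>; for a
  list \<open>ps\<close> enumerating a partition it embeds \<open>G\<^sup>n\<close> onto \<open>V_part (set ps)\<close>.
\<close>
definition spread :: "'l set list \<Rightarrow> 'v list \<Rightarrow> 'l \<Rightarrow> 'v" where
  "spread ps w x = w ! (SOME j. j < length ps \<and> x \<in> ps ! j)"

lemma spread_nth:
  assumes "partition_on UNIV (set ps)" "distinct ps" "j < length ps" "x \<in> ps ! j"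
  shows "spread ps w x = w ! j"
proof -
  let ?j = "SOME j. j < length ps \<and> x \<in> ps ! j"
  have "?j < length ps \<and> x \<in> ps ! ?j"
    by (rule someI[of _ j]) (simp add: assms(3,4))
  then have j': "?j < length ps" "x \<in> ps ! ?j"
    by simp_all
  have "ps ! ?j = ps ! j"
  proof (rule ccontr)
    assume "ps ! ?j \<noteq> ps ! j"
    with j'(1) assms(3) have "ps ! ?j \<inter> ps ! j = {}"
      using disjointD[OF partition_onD2[OF assms(1)]] by simp
    with j'(2) assms(4) show False
      by blast
  qed
  then show ?thesis
    using j'(1) assms(2,3) by (simp add: spread_def nth_eq_iff_index_eq)
qed

lemma spread_cover:
  assumes "partition_on UNIV (set ps)"
  obtains j where "j < length ps" "x \<in> ps ! j"
  using partition_onD1[OF assms] by (metis UnionE UNIV_I in_set_conv_nth)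

lemma power_coloring_spread:
  assumes "partition_on UNIV (set ps)" "distinct ps"
    and bpc: "big_power_coloring E k \<Phi>"
  shows "power_coloring E (length ps) k (\<lambda>w. \<Phi> (spread ps w))"
  unfolding power_coloring_def
proof (intro conjI allI impI)
  fix v w assume len: "length v = length ps" "length w = length ps" and "list_all2 E v w"
  have "E (spread ps v x) (spread ps w x)" for x
  proof -
    obtain j where j: "j < length ps" "x \<in> ps ! j"
      using spread_cover[OF assms(1)] .
    then have "E (v ! j) (w ! j)"
      using len \<open>list_all2 E v w\<close> by (simp add: list_all2_nthD)
    then show ?thesis
      by (simp add: spread_nth[OF assms(1,2) j])
  qed
  then show "\<Phi> (spread ps v) \<noteq> \<Phi> (spread ps w)"
    using bpc by (simp add: big_power_coloring_def)
qed (use bpc in \<open>simp add: big_power_coloring_def\<close>)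

lemma spread_val_on:
  assumes "partition_on UNIV (set ps)" "distinct ps" "v \<in> V_part (set ps)"
  shows "spread ps (map (val_on v) ps) = v"
proof
  fix x
  obtain j where j: "j < length ps" "x \<in> ps ! j"
    using spread_cover[OF assms(1)] .
  have "spread ps (map (val_on v) ps) x = val_on v (ps ! j)"
    using j(1) by (simp add: spread_nth[OF assms(1,2) j])
  also have "\<dots> = v x"
    using val_on_eq[OF assms(3) nth_mem[OF j(1)] subset_refl j(2)] .
  finally show "spread ps (map (val_on v) ps) x = v x" .
qed

lemma determining_piece_exists:
  assumes tpc: "trivially_power_colorable E"
    and bpc: "big_power_coloring E (chromatic_number E) \<Phi>"
    and P: "finite_partition P"
  shows "\<exists>A. determining_piece E \<Phi> P A"
proof -
  obtain ps where ps: "set ps = P" "distinct ps"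
    using P finite_distinct_list unfolding finite_partition_def by blast
  have part: "partition_on UNIV (set ps)"
    using P ps(1) by (simp add: finite_partition_def)
  have "length ps > 0"
    using spread_cover[OF part] by fastforce
  then obtain i \<phi> where i: "i < length ps" "proper_coloring E (chromatic_number E) \<phi>"
      and factors: "\<forall>w. length w = length ps \<longrightarrow> \<Phi> (spread ps w) = \<phi> (w ! i)"
    using tpc power_coloring_spread[OF part ps(2) bpc]
    unfolding trivially_power_colorable_def by blast
  have "\<Phi> v = \<phi> (val_on v (ps ! i))" if "v \<in> V_part P" for v
  proof -
    have "spread ps (map (val_on v) ps) = v"
      using spread_val_on[OF part ps(2)] that ps(1) by simp
    then show ?thesis
      using factors[rule_format, of "map (val_on v) ps"] i(1) by simp
  qed
  then have "determining_piece E \<Phi> P (ps ! i)"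
    using i ps(1) unfolding determining_piece_def by auto
  then show ?thesis ..
qed

subsection \<open>The family \<open>I(P)\<close>\<close>

locale trivial_power_coloring =
  fixes E :: "'v \<Rightarrow> 'v \<Rightarrow> bool" and \<Phi> :: "('l \<Rightarrow> 'v) \<Rightarrow> nat"
  assumes has_edge: "\<exists>a b. E a b"
    and trivially_power_colorable: "trivially_power_colorable E"
    and big_power_coloring: "big_power_coloring E (chromatic_number E) \<Phi>"
begin

lemma determining_piece_I_part:
  assumes P: "finite_partition P"
  shows "determining_piece E \<Phi> P (I_part E \<Phi> P)"
proof -
  obtain a b where edge: "E a b"
    using has_edge by blast
  have part: "partition_on UNIV P"
    using P by (simp add: finite_partition_def)
  have "\<exists>!A. determining_piece E \<Phi> P A"
  proof (rule ex_ex1I)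
    show "\<exists>A. determining_piece E \<Phi> P A"
      using determining_piece_exists[OF trivially_power_colorable big_power_coloring P] .
  next
    fix A C assume "determining_piece E \<Phi> P A" "determining_piece E \<Phi> P C"
    then obtain \<phi> \<psi> where A: "A \<in> P" "\<forall>v\<in>V_part P. \<Phi> v = \<phi> (val_on v A)"
      and C: "C \<in> P" "proper_coloring E (chromatic_number E) \<psi>"
        "\<forall>v\<in>V_part P. \<Phi> v = \<psi> (val_on v C)"
      unfolding determining_piece_def by blast
    obtain x where x: "x \<in> A"
      using partition_onD3[OF part] A(1) by fastforce
    have "\<forall>v\<in>V_part P. \<phi> (val_on v A) = \<psi> (val_on v C)"
      using A(2) C(3) by simp
    then show "A = C"
      using piece_eq_if_colorings_agree[OF part edge C(2) x subset_refl A(1) C(1)] by blast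
  qed
  then show ?thesis
    unfolding I_part_def determining_piece_def[symmetric] by (rule theI')
qed

lemma I_part_mem: "finite_partition P \<Longrightarrow> I_part E \<Phi> P \<in> P"
  using determining_piece_I_part by (simp add: determining_piece_def)

lemma I_part_nonempty:
  assumes "finite_partition P"
  shows "I_part E \<Phi> P \<noteq> {}"
proof -
  have "{} \<notin> P"
    using assms partition_onD3 by (auto simp: finite_partition_def)
  with I_part_mem[OF assms] show ?thesis
    by metis
qed

lemma I_part_mono:
  assumes R: "finite_partition R" and P: "finite_partition P" and refines: "refines UNIV R P"
  shows "I_part E \<Phi> R \<subseteq> I_part E \<Phi> P"
proof -
  obtain a b where edge: "E a b"
    using has_edge by blast
  obtain \<phi> where \<phi>: "\<forall>v\<in>V_part R. \<Phi> v = \<phi> (val_on v (I_part E \<Phi> R))"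
    using determining_piece_I_part[OF R] by (auto simp: determining_piece_def)
  obtain \<psi> where \<psi>: "proper_coloring E (chromatic_number E) \<psi>"
      "\<forall>v\<in>V_part P. \<Phi> v = \<psi> (val_on v (I_part E \<Phi> P))"
    using determining_piece_I_part[OF P] by (auto simp: determining_piece_def)
  obtain Y where Y: "Y \<in> P" "I_part E \<Phi> R \<subseteq> Y"
    using refines I_part_mem[OF R] by (auto simp: refines_def)
  obtain x where x: "x \<in> I_part E \<Phi> R"
    using I_part_nonempty[OF R] by blast
  have agree: "\<forall>v\<in>V_part P. \<phi> (val_on v (I_part E \<Phi> R)) = \<psi> (val_on v (I_part E \<Phi> P))"
  proof
    fix v :: "'l \<Rightarrow> 'v" assume v: "v \<in> V_part P"
    have "v \<in> V_part R"
      using V_part_antimono[OF refines] v ..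
    with \<phi> have "\<Phi> v = \<phi> (val_on v (I_part E \<Phi> R))" ..
    moreover have "\<Phi> v = \<psi> (val_on v (I_part E \<Phi> P))"
      using \<psi>(2) v ..
    ultimately show "\<phi> (val_on v (I_part E \<Phi> R)) = \<psi> (val_on v (I_part E \<Phi> P))"
      by simp
  qed
  have "partition_on UNIV P"
    using P by (simp add: finite_partition_def)
  from piece_eq_if_colorings_agree[OF this edge \<psi>(1) x Y(2,1) I_part_mem[OF P] agree]
  have "Y = I_part E \<Phi> P" .
  with Y(2) show ?thesis by simp
qed

lemma I_part_common_lower_bound:
  assumes "finite_partition P" "finite_partition Q"
  obtains R where "finite_partition R" "I_part E \<Phi> R \<subseteq> I_part E \<Phi> P \<inter> I_part E \<Phi> Q"
proof -
  obtain R where R: "finite_partition R" "refines UNIV R P" "refines UNIV R Q"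
    using finite_partition_common_refinement[OF assms] .
  have "I_part E \<Phi> R \<subseteq> I_part E \<Phi> P" "I_part E \<Phi> R \<subseteq> I_part E \<Phi> Q"
    using I_part_mono[OF R(1) assms(1) R(2)] I_part_mono[OF R(1) assms(2) R(3)] .
  then show thesis
    by (intro that[OF R(1)]) simp
qed

lemma I_part_UNIV: "I_part E \<Phi> {UNIV} = UNIV"
  using I_part_mem[OF finite_partition_UNIV] by simp

definition coordinate_family :: "'l set set" where
  "coordinate_family = {I_part E \<Phi> P | P. finite_partition P}"

lemma UNIV_mem_coordinate_family: "UNIV \<in> coordinate_family"
  unfolding coordinate_family_def using I_part_UNIV finite_partition_UNIV by blast

lemma empty_not_mem_coordinate_family: "{} \<notin> coordinate_family"
  unfolding coordinate_family_def using I_part_nonempty by blast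

lemma coordinate_family_upward_closed:
  assumes A: "A \<in> coordinate_family" and sub: "A \<subseteq> B"
  shows "B \<in> coordinate_family"
proof (cases "B = UNIV")
  case True
  then show ?thesis
    using UNIV_mem_coordinate_family by simp
next
  case False
  obtain P where P: "finite_partition P" "I_part E \<Phi> P \<subseteq> B"
    using A sub unfolding coordinate_family_def by blast
  then have "B \<noteq> {}"
    using I_part_nonempty by blast
  then have Q: "finite_partition {B, - B}"
    using False by (rule finite_partition_Compl)
  obtain R where R: "finite_partition R"
      "I_part E \<Phi> R \<subseteq> I_part E \<Phi> P \<inter> I_part E \<Phi> {B, - B}"
    using I_part_common_lower_bound[OF P(1) Q] .
  have "I_part E \<Phi> {B, - B} \<noteq> - B"
  proof
    assume "I_part E \<Phi> {B, - B} = - B"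
    with R(2) P(2) have "I_part E \<Phi> R = {}" by auto
    with I_part_nonempty[OF R(1)] show False ..
  qed
  then have "I_part E \<Phi> {B, - B} = B"
    using I_part_mem[OF Q] by blast
  with Q show ?thesis
    unfolding coordinate_family_def by blast
qed

lemma coordinate_family_Int:
  assumes "A \<in> coordinate_family" "B \<in> coordinate_family"
  shows "A \<inter> B \<in> coordinate_family"
proof -
  obtain P Q where "finite_partition P" "finite_partition Q"
      and "A = I_part E \<Phi> P" "B = I_part E \<Phi> Q"
    using assms unfolding coordinate_family_def by blast
  then obtain R where "finite_partition R" "I_part E \<Phi> R \<subseteq> A \<inter> B"
    using I_part_common_lower_bound by metis
  then show ?thesis
    using coordinate_family_upward_closed unfolding coordinate_family_def by blast
qed

lemma coordinate_family_Compl: "A \<in> coordinate_family \<or> - A \<in> coordinate_family"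
proof (cases "A = {} \<or> A = UNIV")
  case True
  then show ?thesis
    using UNIV_mem_coordinate_family by auto
next
  case False
  then have "finite_partition {A, - A}"
    by (intro finite_partition_Compl) simp_all
  with I_part_mem[of "{A, - A}"] show ?thesis
    unfolding coordinate_family_def by blast
qed

lemma ultrafilter_on_coordinate_family: "ultrafilter_on UNIV coordinate_family"
  unfolding ultrafilter_on_def
  using UNIV_mem_coordinate_family empty_not_mem_coordinate_family
    coordinate_family_upward_closed coordinate_family_Int coordinate_family_Compl
  by (simp add: Compl_eq_Diff_UNIV)

end

theorem mainTheorem18:
  fixes E :: "'v::finite \<Rightarrow> 'v \<Rightarrow> bool"
    and \<Phi> :: "('l \<Rightarrow> 'v) \<Rightarrow> nat"
  assumes "simple_graph E"
    and "\<exists>a b. E a b"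
    and "trivially_power_colorable E"
    and "infinite (UNIV :: 'l set)"
    and "big_power_coloring E (chromatic_number E) \<Phi>"
  shows "ultrafilter_on (UNIV :: 'l set) {I_part E \<Phi> P | P. finite_partition P}"
proof -
  interpret trivial_power_coloring E \<Phi>
    using assms(2,3,5) by unfold_locales
  show ?thesis
    using ultrafilter_on_coordinate_family unfolding coordinate_family_def .
qed

end
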